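(* Let $(X,\leq,\cdot)$ be a Jacobi commutator semi-lattice, let $x\in X$, and let $g:X\to X$ be the inner derivation defined by $g(s)=x\cdot s$ for each $s\in X$. Then for all non-negative integers $i$ and $j$, $$g^i(x)\cdot g^j(x)\leq g^{i+j+1}(x),$$ where $g^0$ denotes the identity map.
   Context: A join semi-lattice is a poset $(X,\leq)$ with a binary operation $\vee$ that is idempotent, commutative and associative, such that $a\leq b \iff a\vee b=b$ for all $a,b\in X$. A commutator semi-lattice is a triple $(X,\leq,\cdot)$ where $(X,\leq,\vee)$ is a join semi-lattice and $\cdot$ is a binary operation on $X$ such that: $\cdot$ is commutative; $a\cdot b\leq b$ for all $a,b$; and $a\cdot(b\vee c)=(a\cdot b)\vee(a\cdot c)$ for all $a,b,c$. It is a Jacobi commutator semi-lattice if moreover $a\cdot(b\cdot c)\leq ((a\cdot b)\cdot c)\vee(b\cdot(a\cdot c))$ for all $a,b,c\in X$. A derivation of a commutator semi-lattice is a map $f:X\to X$ preserving joins ($f(a\vee b)=f(a)\vee f(b)$) and satisfying $f(a\cdot b)\leq (f(a)\cdot b)\vee(a\cdot f(b))$ for all $a,b$; it is inner if $f=x\cdot-$ for some $x\in X$. *)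

theory Defs
  imports Main
begin

definition commutator_semilattice :: "('a::semilattice_sup \<Rightarrow> 'a \<Rightarrow> 'a) \<Rightarrow> bool" where
  "commutator_semilattice m \<longleftrightarrow>
     (\<forall>a b. m a b = m b a) \<and>
     (\<forall>a b. m a b \<le> b) \<and>
     (\<forall>a b c. m a (sup b c) = sup (m a b) (m a c))"

definition jacobi_commutator_semilattice :: "('a::semilattice_sup \<Rightarrow> 'a \<Rightarrow> 'a) \<Rightarrow> bool" where
  "jacobi_commutator_semilattice m \<longleftrightarrow>
     commutator_semilattice m \<and>
     (\<forall>a b c. m a (m b c) \<le> sup (m (m a b) c) (m b (m a c)))"

end

theory Submission
  imports Defs
begin

text \<open>Write \<open>x\<^sub>k = g\<^sup>k x\<close>, so \<open>x\<^sub>k\<^sub>+\<^sub>1 = x \<cdot> x\<^sub>k\<close>. Induct on \<open>i\<close>, for all \<open>j\<close> at once.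
  The Jacobi inequality splits \<open>x\<^sub>j \<cdot> (x \<cdot> x\<^sub>i)\<close> into \<open>(x\<^sub>j \<cdot> x) \<cdot> x\<^sub>i = x\<^sub>i \<cdot> x\<^sub>j\<^sub>+\<^sub>1\<close>,
  covered by the hypothesis for \<open>j + 1\<close>, and \<open>x \<cdot> (x\<^sub>j \<cdot> x\<^sub>i)\<close>, covered by the
  hypothesis for \<open>j\<close> once we note that multiplication by \<open>x\<close> is monotone.\<close>

lemma commutator_semilattice_commute:
  "commutator_semilattice m \<Longrightarrow> m a b = m b a"
  unfolding commutator_semilattice_def by blast

lemma commutator_semilattice_sup_distrib:
  "commutator_semilattice m \<Longrightarrow> m a (sup b c) = sup (m a b) (m a c)"
  unfolding commutator_semilattice_def by blast

lemma commutator_semilattice_mono: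
  assumes "commutator_semilattice m" and "b \<le> c"
  shows "m a b \<le> m a c"
proof -
  have "m a c = sup (m a b) (m a c)"
    using commutator_semilattice_sup_distrib[OF assms(1), of a b c] assms(2)
    by (simp add: sup_absorb2)
  then show ?thesis
    by (metis sup_ge1)
qed

lemma jacobi_commutator_semilatticeD:
  assumes "jacobi_commutator_semilattice m"
  shows "commutator_semilattice m"
    and "m a (m b c) \<le> sup (m (m a b) c) (m b (m a c))"
  using assms unfolding jacobi_commutator_semilattice_def by blast+

lemma jacobi_inner_derivation_iterates:
  assumes jacobi: "jacobi_commutator_semilattice m"
  shows "m ((m x ^^ i) x) ((m x ^^ j) x) \<le> (m x ^^ (i + j + 1)) x"
proof (induction i arbitrary: j)
  case 0
  show ?case by simp
next
  case (Suc i)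
  have cs: "commutator_semilattice m"
    using jacobi by (rule jacobi_commutator_semilatticeD)
  let ?x = "\<lambda>k. (m x ^^ k) x"
  have "m (?x (Suc i)) (?x j) = m (?x j) (m x (?x i))"
    by (simp add: commutator_semilattice_commute[OF cs])
  also have "\<dots> \<le> sup (m (m (?x j) x) (?x i)) (m x (m (?x j) (?x i)))"
    using jacobi by (rule jacobi_commutator_semilatticeD)
  also have "\<dots> \<le> ?x (Suc i + j + 1)"
  proof (rule sup_least)
    have "m (m (?x j) x) (?x i) = m (?x i) (?x (Suc j))"
      by (simp add: commutator_semilattice_commute[OF cs])
    also have "\<dots> \<le> ?x (i + Suc j + 1)"
      by (rule Suc.IH)
    finally show "m (m (?x j) x) (?x i) \<le> ?x (Suc i + j + 1)"
      by simp
  next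
    have "m (?x j) (?x i) \<le> ?x (i + j + 1)"
      using Suc.IH[of j] commutator_semilattice_commute[OF cs, of "?x j" "?x i"] by simp
    then have "m x (m (?x j) (?x i)) \<le> m x (?x (i + j + 1))"
      by (rule commutator_semilattice_mono[OF cs])
    then show "m x (m (?x j) (?x i)) \<le> ?x (Suc i + j + 1)"
      by simp
  qed
  finally show ?case .
qed

theorem proposition2p8:
  fixes m :: "'a::semilattice_sup \<Rightarrow> 'a \<Rightarrow> 'a" and x :: 'a and g :: "'a \<Rightarrow> 'a"
  assumes "jacobi_commutator_semilattice m"
    and "\<And>s. g s = m x s"
  shows "\<forall>i j :: nat. m ((g ^^ i) x) ((g ^^ j) x) \<le> (g ^^ (i + j + 1)) x"
proof -
  have "g = m x"
    using assms(2) by blast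
  then show ?thesis
    using jacobi_inner_derivation_iterates[OF assms(1)] by blast
qed

end
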